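(* Let $G\subset\mathbb{C}$ be a simply connected domain, let $\mathcal{S}\subset G$ be a smooth Jordan curve with bounded face $D$, let $\Gamma\subset\mathbb{C}$ be a smooth Jordan curve with bounded face $\Omega_-$ and unbounded face $\Omega_+$ (with $\infty\in\Omega_+$), and let $f:G\to\hat{\mathbb{C}}$ be meromorphic. Suppose $\mathcal{S}$ is a $\Gamma$-pseudo-lemniscate of $f$. Then for every connected component $E$ of $f^{-1}(\Omega_-)\cap D$ there is a positive integer $n_E$ such that every $w\in\Omega_-$ has exactly $n_E$ preimages under $f$ in $E$, counted with multiplicity. The analogous statement holds with $\Omega_-$ replaced by $\Omega_+$.
   Context: For a meromorphic $f:G\to\hat{\mathbb{C}}$ and a smooth Jordan curve $\Gamma\subset\mathbb{C}$, a connected component of $f^{-1}(\Gamma)$ (in $G$) is called a $\Gamma$-pseudo-lemniscate of $f$. *)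

theory Defs
  imports "HOL-Analysis.Analysis"
begin

primrec vderiv_iter :: "nat \<Rightarrow> (real \<Rightarrow> complex) \<Rightarrow> real \<Rightarrow> complex" where
  "vderiv_iter 0 g = g"
| "vderiv_iter (Suc n) g = (\<lambda>t. vector_derivative (vderiv_iter n g) (at t))"

definition smooth_jordan_curve :: "complex set \<Rightarrow> bool" where
  "smooth_jordan_curve C \<longleftrightarrow>
     (\<exists>\<gamma> :: real \<Rightarrow> complex.
        (\<forall>t. \<gamma> (t + 1) = \<gamma> t) \<and>
        inj_on \<gamma> {0..<1} \<and>
        (\<forall>n t. vderiv_iter n \<gamma> differentiable (at t)) \<and>
        (\<forall>t. vector_derivative \<gamma> (at t) \<noteq> 0) \<and>
        C = \<gamma> ` {0..1})"

text \<open>A meromorphic function f : G \<rightarrow> the Riemann sphere, represented by a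
  complex-valued function f together with its set P of poles (the points
  mapped to infinity): P is a discrete subset of G without accumulation
  points in G, f is holomorphic on G - P, and f tends to infinity at every
  point of P.  The values of f on P are irrelevant.\<close>
definition meromorphic_with_poles ::
    "(complex \<Rightarrow> complex) \<Rightarrow> complex set \<Rightarrow> complex set \<Rightarrow> bool" where
  "meromorphic_with_poles f G P \<longleftrightarrow>
     P \<subseteq> G \<and> (\<forall>z\<in>G. \<not> z islimpt P) \<and> f holomorphic_on (G - P) \<and>
     (\<forall>p\<in>P. filterlim f at_infinity (at p))"

definition zero_order :: "(complex \<Rightarrow> complex) \<Rightarrow> complex \<Rightarrow> nat" where
  "zero_order g z = (LEAST n. (deriv ^^ n) g z \<noteq> 0)"

definition mult_at :: "(complex \<Rightarrow> complex) \<Rightarrow> complex \<Rightarrow> complex \<Rightarrow> nat" where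
  "mult_at f w z = zero_order (\<lambda>x. f x - w) z"

text \<open>Multiplicity of a pole p as a preimage of infinity: order of the zero
  of 1/f (extended by 0 on the poles) at p.\<close>
definition pole_mult :: "(complex \<Rightarrow> complex) \<Rightarrow> complex set \<Rightarrow> complex \<Rightarrow> nat" where
  "pole_mult f P p = zero_order (\<lambda>x. if x \<in> P then 0 else inverse (f x)) p"

end

theory Submission
  imports Defs "HOL-Complex_Analysis.Complex_Analysis"
begin

text \<open>
  Let \<open>E\<close> be a component of \<open>f\<^sup>-\<^sup>1(\<Omega>) \<inter> D\<close>, where \<open>\<Omega>\<close> is a face of \<open>\<Gamma>\<close> and \<open>D\<close> the
  inside of \<open>S\<close>. Every boundary point of \<open>E\<close> lies on \<open>S\<close> or in \<open>D\<close>, and in both cases \<open>f\<close> takes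
  it into \<open>\<Gamma>\<close>, i.e. outside \<open>\<Omega>\<close>. Hence for \<open>w \<in> \<Omega>\<close> the number of \<open>w\<close>-points of \<open>f\<close> in \<open>E\<close>,
  counted with multiplicity, is finite and, by Rouche's theorem on small circles around the
  \<open>w\<close>-points, locally constant in \<open>w\<close>; as \<open>\<Omega>\<close> is connected it is constant, and it is positive
  because \<open>E\<close> is not empty. For the unbounded face the same argument is applied to
  \<open>h = 1/(f - a)\<close> with \<open>a\<close> in the bounded face: \<open>h\<close> is holomorphic near the closure of \<open>E\<close>,
  its zeros are the poles of \<open>f\<close> (with the same multiplicities), and \<open>w \<mapsto> 1/(w - a)\<close> maps
  the unbounded face together with \<open>\<infinity>\<close> onto the open connected set \<open>{0} \<union> 1/(\<Omega> - a)\<close>.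
\<close>

section \<open>Multiplicities and valence\<close>

definition valence :: "(complex \<Rightarrow> complex) \<Rightarrow> complex set \<Rightarrow> complex \<Rightarrow> nat" where
  "valence f E w = (\<Sum>z\<in>{z\<in>E. f z = w}. mult_at f w z)"

lemma nonzero_higher_deriv_exists:
  assumes "g holomorphic_on S" "open S" "connected S" "z \<in> S" "\<exists>w\<in>S. g w \<noteq> 0"
  shows "\<exists>n. (deriv ^^ n) g z \<noteq> 0"
  using holomorphic_fun_eq_0_on_connected[OF assms(1-3) _ assms(4)] assms(5) by blast

lemma zero_order_eq_zorder:
  assumes "g holomorphic_on S" "open S" "connected S" "z \<in> S" "\<exists>w\<in>S. g w \<noteq> 0"
  shows "int (zero_order g z) = zorder g z"
proof -
  have ex: "\<exists>n. (deriv ^^ n) g z \<noteq> 0"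
    using nonzero_higher_deriv_exists[OF assms] .
  have "zorder g z = int (zero_order g z)"
  proof (rule zorder_zero_eqI[OF assms(1,2,4)])
    show "(deriv ^^ nat (int (zero_order g z))) g z \<noteq> 0"
      unfolding zero_order_def using LeastI_ex[OF ex] by simp
    show "\<And>i. i < nat (int (zero_order g z)) \<Longrightarrow> (deriv ^^ i) g z = 0"
      unfolding zero_order_def using not_less_Least by auto
  qed simp
  then show ?thesis by simp
qed

lemma zero_order_pos:
  assumes "g holomorphic_on S" "open S" "connected S" "z \<in> S" "\<exists>w\<in>S. g w \<noteq> 0" "g z = 0"
  shows "zero_order g z > 0"
proof -
  have "(deriv ^^ zero_order g z) g z \<noteq> 0"
    unfolding zero_order_def using LeastI_ex[OF nonzero_higher_deriv_exists[OF assms(1-5)]] .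
  then show ?thesis using assms(6) by (cases "zero_order g z") auto
qed

lemma mult_at_eq_zorder:
  assumes "f holomorphic_on E" "open E" "connected E" "\<not> f constant_on E" "z \<in> E"
  shows "int (mult_at f w z) = zorder (\<lambda>x. f x - w) z"
  unfolding mult_at_def
proof (rule zero_order_eq_zorder[OF _ assms(2,3,5)])
  show "(\<lambda>x. f x - w) holomorphic_on E" using assms(1) by (intro holomorphic_intros)
  show "\<exists>x\<in>E. f x - w \<noteq> 0" using assms(4) by (auto simp: constant_on_def)
qed

lemma mult_at_pos:
  assumes "f holomorphic_on E" "open E" "connected E" "\<not> f constant_on E" "z \<in> E"
  shows "mult_at f (f z) z > 0"
  unfolding mult_at_def
proof (rule zero_order_pos[OF _ assms(2,3,5)])
  show "(\<lambda>x. f x - f z) holomorphic_on E" using assms(1) by (intro holomorphic_intros)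
  show "\<exists>x\<in>E. f x - f z \<noteq> 0" using assms(4) by (auto simp: constant_on_def)
qed simp

lemma zero_order_mult_unit:
  fixes g1 g2 u :: "complex \<Rightarrow> complex"
  assumes B: "open B" "connected B" "z \<in> B" and h2: "g2 holomorphic_on B" and hu: "u holomorphic_on B"
    and un: "\<forall>x\<in>B. u x \<noteq> 0" and eq: "\<forall>x\<in>B. g1 x = g2 x * u x"
  shows "zero_order g1 z = zero_order g2 z"
proof (cases "\<exists>x\<in>B. g2 x \<noteq> 0")
  case True
  have h1: "g1 holomorphic_on B"
    by (rule holomorphic_transform[of "\<lambda>x. g2 x * u x"]) (use h2 hu eq in \<open>auto intro: holomorphic_intros\<close>)
  have ne1: "\<exists>x\<in>B. g1 x \<noteq> 0" using True eq un by auto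
  define n where "n = zorder g2 z"
  obtain r where nn: "if g2 z = 0 then n > 0 else n = 0" and r: "r > 0" "cball z r \<subseteq> B"
    "zor_poly g2 z holomorphic_on cball z r"
    "\<forall>w\<in>cball z r. g2 w = zor_poly g2 z w * (w - z) ^ nat n \<and> zor_poly g2 z w \<noteq> 0"
    using zorder_exist_zero[OF h2 B True] unfolding n_def by blast
  have "zorder g1 z = n"
  proof (rule zorder_eqI[of "ball z r" z "\<lambda>x. zor_poly g2 z x * u x"])
    show "(\<lambda>x. zor_poly g2 z x * u x) holomorphic_on ball z r"
      using r(2) by (intro holomorphic_intros holomorphic_on_subset[OF r(3)] holomorphic_on_subset[OF hu]) auto
    show "zor_poly g2 z z * u z \<noteq> 0" using r(1,4) un B(3) by auto
    fix w assume "w \<in> ball z r"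
    then have "w \<in> B" "w \<in> cball z r" using r(2) by auto
    moreover have "n \<ge> 0" using nn by (auto split: if_splits)
    ultimately show "g1 w = zor_poly g2 z w * u w * (w - z) powi n"
      using eq r(4) by (simp add: power_int_def)
  qed (use r(1) in auto)
  then show ?thesis
    using zero_order_eq_zorder[OF h1 B ne1] zero_order_eq_zorder[OF h2 B True] n_def by simp
next
  case False
  then have "eventually (\<lambda>x. g1 x = g2 x) (nhds z)"
    using eq B(1,3) unfolding eventually_nhds by auto
  then have "\<And>n. (deriv ^^ n) g1 z = (deriv ^^ n) g2 z"
    by (intro higher_deriv_cong_ev) auto
  then show ?thesis unfolding zero_order_def by simp
qed

section \<open>Rouche's theorem and local constancy of the valence\<close>

lemma finite_level_set_compact:
  assumes "f holomorphic_on S" "open S" "connected S" "\<not> f constant_on S" "compact K" "K \<subseteq> S"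
  shows "finite {z\<in>K. f z = w}"
proof -
  have "\<not> (\<lambda>z. f z - w) constant_on S"
    using assms(4) unfolding constant_on_def by (metis diff_add_cancel)
  then have "finite {z\<in>K. f z - w = 0}"
    using assms by (intro holomorphic_compact_finite_zeros) (auto intro: holomorphic_intros)
  then show ?thesis by simp
qed

lemma finite_level_set_avoiding_frontier:
  fixes f :: "complex \<Rightarrow> complex"
  assumes U: "open U" "f holomorphic_on U"
    and E: "open E" "connected E" "bounded E" "closure E \<subseteq> U" "\<not> f constant_on E"
    and fr: "\<forall>z\<in>frontier E. f z \<noteq> w"
  shows "finite {z\<in>E. f z = w}"
proof -
  have "continuous_on (closure E) f"
    using U E(4) holomorphic_on_imp_continuous_on holomorphic_on_subset by blast
  then have "closed {z\<in>closure E. f z = w}"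
    by (intro continuous_closed_preimage_constant) auto
  moreover have "{z\<in>E. f z = w} = {z\<in>closure E. f z = w}"
    using E(1) fr closure_Un_frontier[of E] by auto
  ultimately have K: "compact {z\<in>E. f z = w}"
    using E(3) by (metis (no_types, lifting) bounded_closure bounded_subset compact_eq_bounded_closed
        mem_Collect_eq subsetI)
  have "f holomorphic_on E"
    using U(2) E(4) closure_subset holomorphic_on_subset by blast
  from finite_level_set_compact[OF this E(1,2,5) K, of w] show ?thesis by simp
qed

lemma winding_number_circlepath_outside:
  assumes "0 < r" "p \<notin> cball z r"
  shows "winding_number (circlepath z r) p = 0"
  by (rule winding_number_zero_outside[of _ "cball z r"]) (use assms in auto)

lemma sum_winding_zorder_circlepath:
  fixes f :: "complex \<Rightarrow> complex"
  assumes f: "f holomorphic_on S" "open S" "connected S" "\<not> f constant_on S"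
    and R: "cball z R \<subseteq> S" "0 < r" "r < R" and v: "\<forall>x\<in>sphere z r. f x \<noteq> v"
  shows "finite {p\<in>ball z R. f p = v}"
    and "(\<Sum>p\<in>{p\<in>ball z R. f p = v}. winding_number (circlepath z r) p * zorder (\<lambda>x. f x - v) p)
           = of_nat (valence f (ball z r) v)"
proof -
  have "finite {p\<in>cball z R. f p = v}"
    using finite_level_set_compact[OF f compact_cball R(1)] .
  then show fin: "finite {p\<in>ball z R. f p = v}"
    by (rule rev_finite_subset) auto
  have sub: "{p\<in>ball z r. f p = v} \<subseteq> {p\<in>ball z R. f p = v}" using R(3) by auto
  have "(\<Sum>p\<in>{p\<in>ball z R. f p = v}. winding_number (circlepath z r) p * zorder (\<lambda>x. f x - v) p)
      = (\<Sum>p\<in>{p\<in>ball z r. f p = v}. winding_number (circlepath z r) p * zorder (\<lambda>x. f x - v) p)"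
  proof (rule sum.mono_neutral_right[OF fin sub])
    show "\<forall>p\<in>{p\<in>ball z R. f p = v} - {p\<in>ball z r. f p = v}.
            winding_number (circlepath z r) p * of_int (zorder (\<lambda>x. f x - v) p) = 0"
      using v R(2) by (auto intro!: winding_number_circlepath_outside simp: dist_commute)
  qed
  also have "\<dots> = (\<Sum>p\<in>{p\<in>ball z r. f p = v}. of_nat (mult_at f v p))"
  proof (rule sum.cong[OF refl])
    fix p assume p: "p \<in> {p\<in>ball z r. f p = v}"
    then have "winding_number (circlepath z r) p = 1"
      by (intro winding_number_circlepath) (simp add: dist_norm norm_minus_commute)
    moreover have "p \<in> S" using p R(1,3) by auto
    ultimately show "winding_number (circlepath z r) p * of_int (zorder (\<lambda>x. f x - v) p)
        = of_nat (mult_at f v p)"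
      using mult_at_eq_zorder[OF f \<open>p \<in> S\<close>, of v] by (metis mult_1 of_int_of_nat_eq)
  qed
  finally show "(\<Sum>p\<in>{p\<in>ball z R. f p = v}. winding_number (circlepath z r) p * zorder (\<lambda>x. f x - v) p)
           = of_nat (valence f (ball z r) v)"
    unfolding valence_def of_nat_sum .
qed

lemma valence_ball_eq_Rouche:
  fixes f :: "complex \<Rightarrow> complex"
  assumes f: "f holomorphic_on S" "open S" "connected S" "\<not> f constant_on S"
    and R: "cball z R \<subseteq> S" "0 < r" "r < R"
    and less: "\<forall>x\<in>sphere z r. cmod (w - w1) < cmod (f x - w1)"
  shows "valence f (ball z r) w = valence f (ball z r) w1"
proof -
  have "\<forall>x\<in>sphere z r. f x \<noteq> w" "\<forall>x\<in>sphere z r. f x \<noteq> w1"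
    using less by (metis norm_ge_zero not_less_iff_gr_or_eq right_minus_eq norm_zero norm_minus_commute order.strict_trans1)+
  note w = sum_winding_zorder_circlepath[OF f R this(1)]
    and w1 = sum_winding_zorder_circlepath[OF f R this(2)]
  have hol: "(\<lambda>x. f x - w1) holomorphic_on ball z R"
    using R(1) by (intro holomorphic_intros holomorphic_on_subset[OF f(1)]) auto
  have shift: "(\<lambda>p. f p - w1 + (w1 - w)) = (\<lambda>p. f p - w)" by auto
  have "(\<Sum>p\<in>{p\<in>ball z R. f p - w1 + (w1 - w) = 0}.
          winding_number (circlepath z r) p * zorder (\<lambda>p. f p - w1 + (w1 - w)) p)
      = (\<Sum>p\<in>{p\<in>ball z R. f p - w1 = 0}. winding_number (circlepath z r) p * zorder (\<lambda>p. f p - w1) p)"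
  proof (rule Rouche_theorem)
    show "\<forall>x\<in>path_image (circlepath z r). cmod (w1 - w) < cmod (f x - w1)"
      using less R(2) by (simp add: norm_minus_commute)
    show "\<forall>p. p \<notin> ball z R \<longrightarrow> winding_number (circlepath z r) p = 0"
      using R(2,3) by (auto intro!: winding_number_circlepath_outside)
  qed (use w(1) w1(1) hol R in auto)
  then have "(of_nat (valence f (ball z r) w) :: complex) = of_nat (valence f (ball z r) w1)"
    unfolding shift w(2)[symmetric] w1(2)[symmetric] by simp
  then show ?thesis by (simp only: of_nat_eq_iff)
qed

lemma eventually_separating_cballs:
  fixes Z :: "'a::metric_space set"
  assumes "finite Z" "Z \<subseteq> E" "open E"
  shows "\<forall>\<^sub>F R in at_right 0. \<forall>z\<in>Z. cball z R \<subseteq> E \<and> (\<forall>z'\<in>Z - {z}. 2 * R < dist z z')"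
proof (intro eventually_ball_finite[OF assms(1)] ballI eventually_conj)
  fix z assume "z \<in> Z"
  then obtain e where "e > 0" "cball z e \<subseteq> E" using assms(2,3) open_contains_cball by blast
  moreover have "\<forall>\<^sub>F R in at_right 0. R < e"
    using order_tendstoD(2)[OF tendsto_ident_at \<open>e > 0\<close>] .
  ultimately show "\<forall>\<^sub>F R in at_right 0. cball z R \<subseteq> E"
    by (elim eventually_mono) auto
  show "\<forall>\<^sub>F R in at_right 0. \<forall>z'\<in>Z - {z}. 2 * R < dist z z'"
  proof (intro eventually_ball_finite ballI)
    fix z' assume "z' \<in> Z - {z}"
    then have "dist z z' / 2 > 0" by auto
    from order_tendstoD(2)[OF tendsto_ident_at[of 0 "{0<..}"] this]
    show "\<forall>\<^sub>F R in at_right 0. 2 * R < dist z z'" by (elim eventually_mono) auto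
  qed (use assms(1) in simp)
qed

lemma compact_norm_lower_bound:
  fixes g :: "'a::topological_space \<Rightarrow> 'b::real_normed_vector"
  assumes "compact K" "continuous_on K g" "\<forall>x\<in>K. g x \<noteq> 0"
  obtains \<delta> where "\<delta> > 0" "\<forall>x\<in>K. \<delta> \<le> norm (g x)"
proof (cases "K = {}")
  case False
  obtain x0 where "x0 \<in> K" "\<forall>y\<in>K. norm (g x0) \<le> norm (g y)"
    using continuous_attains_inf[OF assms(1) False continuous_on_norm[OF assms(2)]] by blast
  moreover have "norm (g x0) > 0" using \<open>x0 \<in> K\<close> assms(3) by simp
  ultimately show ?thesis using that by blast
qed (use that[of 1] in auto)

lemma valence_UN_disjoint:
  assumes "finite Z" "\<forall>z\<in>Z. B z \<subseteq> E" "disjoint_family_on B Z"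
    and "{x\<in>E. f x = w} \<subseteq> (\<Union>z\<in>Z. B z)" "\<forall>z\<in>Z. finite {x\<in>B z. f x = w}"
  shows "valence f E w = (\<Sum>z\<in>Z. valence f (B z) w)"
proof -
  have "{x\<in>E. f x = w} = (\<Union>z\<in>Z. {x\<in>B z. f x = w})"
    using assms(2,4) by auto
  then show ?thesis
    unfolding valence_def using assms(1,3,5)
    by (simp add: sum.UNION_disjoint disjoint_family_on_def, intro sum.UNION_disjoint) auto
qed

lemma separated_balls:
  fixes Z :: "'a::metric_space set"
  assumes "r < R" "\<forall>z\<in>Z. \<forall>z'\<in>Z - {z}. 2 * R < dist z z'"
  shows "\<And>z z' x. z \<in> Z \<Longrightarrow> z' \<in> Z - {z} \<Longrightarrow> dist z x \<le> r \<Longrightarrow> r < dist z' x"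
    and "disjoint_family_on (\<lambda>z. ball z r) Z"
proof -
  show sep: "r < dist z' x" if "z \<in> Z" "z' \<in> Z - {z}" "dist z x \<le> r" for z z' x
  proof -
    have "2 * R < dist z z'" using assms(2) that(1,2) by blast
    moreover have "dist z z' \<le> dist z x + dist z' x"
      using dist_triangle[of z z' x] by (simp add: dist_commute)
    ultimately show ?thesis using assms(1) that(3) by linarith
  qed
  show "disjoint_family_on (\<lambda>z. ball z r) Z"
    unfolding disjoint_family_on_def
  proof (intro ballI impI equals0I)
    fix m n x assume "m \<in> Z" "n \<in> Z" "m \<noteq> n" "x \<in> ball m r \<inter> ball n r"
    then show False using sep[of m n x] by auto
  qed
qed

lemma valence_eq_if_close_off_balls:
  fixes f :: "complex \<Rightarrow> complex"
  assumes f: "f holomorphic_on E" "open E" "connected E" "\<not> f constant_on E"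
    and Z: "finite Z" "Z = {z\<in>E. f z = w1}"
    and R: "0 < r" "r < R" "\<forall>z\<in>Z. cball z R \<subseteq> E \<and> (\<forall>z'\<in>Z - {z}. 2 * R < dist z z')"
    and close: "\<forall>x\<in>E - (\<Union>z\<in>Z. ball z r). cmod (w - w1) < cmod (f x - w1)"
  shows "valence f E w = valence f E w1"
proof -
  have "\<forall>z\<in>Z. \<forall>z'\<in>Z - {z}. 2 * R < dist z z'" using R(3) by blast
  note sep = separated_balls[OF R(2) this]
  have cball: "cball z r \<subseteq> E" if "z \<in> Z" for z
    using R(2,3) that subset_cball[of r R z] by auto
  have cover: "{x\<in>E. f x = w} \<subseteq> (\<Union>z\<in>Z. ball z r)"
  proof
    fix x assume x: "x \<in> {x\<in>E. f x = w}"
    show "x \<in> (\<Union>z\<in>Z. ball z r)"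
    proof (rule ccontr)
      assume "x \<notin> (\<Union>z\<in>Z. ball z r)"
      then have "cmod (w - w1) < cmod (f x - w1)" using close x by blast
      then show False using x by simp
    qed
  qed
  have fin: "finite {x\<in>ball z r. f x = w}" if "z \<in> Z" for z
    using finite_level_set_compact[OF f compact_cball cball[OF that], of w]
    by (rule rev_finite_subset) auto
  have loc: "valence f (ball z r) w = mult_at f w1 z" if z: "z \<in> Z" for z
  proof -
    have "\<forall>x\<in>sphere z r. x \<in> E - (\<Union>z\<in>Z. ball z r)"
    proof
      fix x assume x: "x \<in> sphere z r"
      have "x \<notin> ball z' r" if "z' \<in> Z" for z'
        using x sep(1)[OF z, of z' x] that by (cases "z' = z") auto
      then show "x \<in> E - (\<Union>z\<in>Z. ball z r)" using x cball[OF z] by auto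
    qed
    then have "valence f (ball z r) w = valence f (ball z r) w1"
      using R z close by (intro valence_ball_eq_Rouche[OF f, of z R]) auto
    moreover have "{x\<in>ball z r. f x = w1} = {z}"
    proof (intro equalityI subsetI)
      fix x assume x: "x \<in> {x\<in>ball z r. f x = w1}"
      then have "x \<in> Z" using Z(2) cball[OF z] by auto
      then show "x \<in> {z}" using sep(1)[OF z, of x x] x R(1) by (cases "x = z") auto
    qed (use z Z(2) R(1) in auto)
    ultimately show ?thesis by (simp add: valence_def)
  qed
  have "valence f E w = (\<Sum>z\<in>Z. valence f (ball z r) w)"
    using Z(1) sep(2) cover fin cball ball_subset_cball by (intro valence_UN_disjoint) blast+
  also have "\<dots> = (\<Sum>z\<in>Z. mult_at f w1 z)"
    using loc by simp
  finally show ?thesis by (simp add: valence_def Z(2))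
qed

lemma valence_locally_constant:
  fixes f :: "complex \<Rightarrow> complex"
  assumes U: "open U" "f holomorphic_on U"
    and E: "open E" "connected E" "bounded E" "closure E \<subseteq> U" "\<not> f constant_on E"
    and fr: "\<forall>z\<in>frontier E. f z \<noteq> w1"
  shows "\<forall>\<^sub>F w in nhds w1. valence f E w = valence f E w1"
proof -
  have fE: "f holomorphic_on E" using U(2) E(4) closure_subset holomorphic_on_subset by blast
  define Z where "Z = {z\<in>E. f z = w1}"
  have Z: "finite Z" "Z \<subseteq> E"
    unfolding Z_def using finite_level_set_avoiding_frontier[OF U E fr] by auto
  obtain R where R: "R > 0" "\<forall>z\<in>Z. cball z R \<subseteq> E \<and> (\<forall>z'\<in>Z - {z}. 2 * R < dist z z')"
    using eventually_happens'[OF trivial_limit_at_right_real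
        eventually_conj[OF eventually_at_right_less eventually_separating_cballs[OF Z E(1)]]]
    by blast
  define K where "K = closure E - (\<Union>z\<in>Z. ball z (R / 2))"
  have "compact K"
    unfolding K_def compact_eq_bounded_closed using E(3)
    by (intro conjI closed_Diff open_UN bounded_subset[OF bounded_closure[OF E(3)]]) auto
  moreover have "continuous_on K (\<lambda>x. f x - w1)"
    using U E(4) unfolding K_def
    by (intro continuous_intros holomorphic_on_imp_continuous_on holomorphic_on_subset[OF U(2)]) auto
  moreover have "\<forall>x\<in>K. f x - w1 \<noteq> 0"
    using fr R(1) closure_Un_frontier[of E] unfolding K_def Z_def by force
  ultimately obtain \<delta> where \<delta>: "\<delta> > 0" "\<forall>x\<in>K. \<delta> \<le> cmod (f x - w1)"
    by (rule compact_norm_lower_bound)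
  have "valence f E w = valence f E w1" if "dist w w1 < \<delta>" for w
  proof (rule valence_eq_if_close_off_balls[OF fE E(1,2,5) Z(1) Z_def _ _ R(2)])
    show "\<forall>x\<in>E - (\<Union>z\<in>Z. ball z (R / 2)). cmod (w - w1) < cmod (f x - w1)"
    proof
      fix x assume "x \<in> E - (\<Union>z\<in>Z. ball z (R / 2))"
      then have "x \<in> K" using closure_subset unfolding K_def by blast
      then have "\<delta> \<le> cmod (f x - w1)" using \<delta>(2) by blast
      moreover have "cmod (w - w1) < \<delta>" using that by (simp add: dist_norm)
      ultimately show "cmod (w - w1) < cmod (f x - w1)" by linarith
    qed
  qed (use R(1) in auto)
  then show ?thesis
    unfolding eventually_nhds_metric using \<delta>(1) by blast
qed

lemma not_constant_on_if_frontier_avoids: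
  fixes f :: "complex \<Rightarrow> complex"
  assumes "continuous_on (closure E) f" "bounded E" "E \<noteq> {}"
    and "f ` E \<subseteq> \<Omega>" "\<forall>z\<in>frontier E. f z \<notin> \<Omega>"
  shows "\<not> f constant_on E"
proof
  assume "f constant_on E"
  then obtain c where c: "\<forall>z\<in>E. f z = c" unfolding constant_on_def by blast
  have "frontier E \<noteq> {}"
    using assms(2,3) frontier_eq_empty not_bounded_UNIV by blast
  then obtain y where y: "y \<in> frontier E" by blast
  have "f ` closure E \<subseteq> {c}"
    by (rule image_closure_subset[OF assms(1)]) (use c in auto)
  then have "f y = c" using y frontier_def by blast
  moreover have "c \<in> \<Omega>" using assms(3,4) c by force
  ultimately show False using assms(5) y by blast
qed

lemma valence_constant:
  fixes f :: "complex \<Rightarrow> complex"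
  assumes U: "open U" "f holomorphic_on U"
    and E: "open E" "connected E" "bounded E" "closure E \<subseteq> U" "E \<noteq> {}"
    and \<Omega>: "open \<Omega>" "connected \<Omega>" "f ` E \<subseteq> \<Omega>" "\<forall>z\<in>frontier E. f z \<notin> \<Omega>"
  shows "\<exists>n>0. \<forall>w\<in>\<Omega>. finite {z\<in>E. f z = w} \<and> valence f E w = n"
proof -
  have fE: "f holomorphic_on E" using U(2) E(4) closure_subset holomorphic_on_subset by blast
  have nc: "\<not> f constant_on E"
    using not_constant_on_if_frontier_avoids[OF _ E(3,5) \<Omega>(3,4)] U E(4)
      holomorphic_on_imp_continuous_on holomorphic_on_subset by blast
  have fr: "\<forall>z\<in>frontier E. f z \<noteq> w" if "w \<in> \<Omega>" for w
    using \<Omega>(4) that by blast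
  have fin: "finite {z\<in>E. f z = w}" if "w \<in> \<Omega>" for w
    using finite_level_set_avoiding_frontier[OF U E(1-4) nc fr[OF that]] .
  have "valence f E constant_on \<Omega>"
  proof (rule locally_constant_imp_constant[OF \<Omega>(2)])
    fix w1 assume w1: "w1 \<in> \<Omega>"
    obtain e where e: "e > 0" "\<forall>w. dist w w1 < e \<longrightarrow> valence f E w = valence f E w1"
      using valence_locally_constant[OF U E(1-4) nc fr[OF w1]] unfolding eventually_nhds_metric by blast
    have "openin (top_of_set \<Omega>) (ball w1 e \<inter> \<Omega>)"
      using \<Omega>(1) by (intro open_openin_trans) auto
    moreover have "\<forall>w\<in>ball w1 e \<inter> \<Omega>. valence f E w = valence f E w1"
    proof
      fix w assume "w \<in> ball w1 e \<inter> \<Omega>"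
      then have "dist w w1 < e" by (simp add: dist_commute)
      then show "valence f E w = valence f E w1" using e(2) by blast
    qed
    moreover have "w1 \<in> ball w1 e \<inter> \<Omega>" using w1 e(1) by simp
    ultimately show "\<exists>T. openin (top_of_set \<Omega>) T \<and> w1 \<in> T \<and> (\<forall>w\<in>T. valence f E w = valence f E w1)"
      by blast
  qed
  then obtain n where n: "\<forall>w\<in>\<Omega>. valence f E w = n" unfolding constant_on_def by blast
  obtain z0 where z0: "z0 \<in> E" using E(5) by blast
  then have "f z0 \<in> \<Omega>" using \<Omega>(3) by blast
  then have "mult_at f (f z0) z0 \<le> valence f E (f z0)"
    unfolding valence_def using z0 fin by (intro member_le_sum) auto
  moreover have "mult_at f (f z0) z0 > 0" using mult_at_pos[OF fE E(1,2) nc z0] .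
  ultimately have "n > 0" using n \<open>f z0 \<in> \<Omega>\<close> by fastforce
  then show ?thesis using n fin by blast
qed

section \<open>Smooth Jordan curves\<close>

lemma smooth_jordan_curve_simple_loop:
  assumes "smooth_jordan_curve C"
  obtains c where "simple_path c" "pathfinish c = pathstart c" "path_image c = C"
proof -
  obtain \<gamma> :: "real \<Rightarrow> complex" where per: "\<And>t. \<gamma> (t + 1) = \<gamma> t" and inj: "inj_on \<gamma> {0..<1}"
    and dif: "\<And>n t. vderiv_iter n \<gamma> differentiable (at t)" and C: "C = \<gamma> ` {0..1}"
    using assms unfolding smooth_jordan_curve_def by blast
  have "continuous_on {0..1} \<gamma>"
    using dif[of 0] by (simp add: continuous_at_imp_continuous_on differentiable_imp_continuous_within)
  then have "path \<gamma>" by (simp add: path_def)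
  have loop: "\<gamma> 1 = \<gamma> 0" using per[of 0] by simp
  have "loop_free \<gamma>" unfolding loop_free_def
  proof (intro ballI impI)
    fix x y :: real assume x: "x \<in> {0..1}" and y: "y \<in> {0..1}" and "\<gamma> x = \<gamma> y"
    define x' where "x' = (if x = 1 then 0 else x)"
    define y' where "y' = (if y = 1 then 0 else y)"
    have "x' \<in> {0..<1}" "y' \<in> {0..<1}" using x y by (auto simp: x'_def y'_def)
    moreover have "\<gamma> x' = \<gamma> y'" using \<open>\<gamma> x = \<gamma> y\<close> loop by (auto simp: x'_def y'_def)
    ultimately have "x' = y'" using inj by (meson inj_onD)
    then show "x = y \<or> x = 0 \<and> y = 1 \<or> x = 1 \<and> y = 0"
      using x y by (auto simp: x'_def y'_def split: if_splits)
  qed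
  with \<open>path \<gamma>\<close> loop C show ?thesis
    by (intro that[of \<gamma>]) (auto simp: simple_path_def pathfinish_def pathstart_def path_image_def)
qed

lemma smooth_jordan_curve_inside:
  assumes "smooth_jordan_curve C"
  shows "compact C" "inside C \<noteq> {}" "connected (inside C)"
proof -
  obtain c where c: "simple_path c" "pathfinish c = pathstart c" "path_image c = C"
    using smooth_jordan_curve_simple_loop[OF assms] by blast
  show "compact C" using c compact_simple_path_image by blast
  show "inside C \<noteq> {}" "connected (inside C)"
    using Jordan_inside_outside[OF c(1,2)] c(3) by auto
qed

section \<open>Meromorphic functions and the shift \<open>1/(f - a)\<close>\<close>

lemma meromorphic_pole_neighbourhood:
  fixes f :: "complex \<Rightarrow> complex"
  assumes mero: "meromorphic_with_poles f G P" and G: "open G" and p: "p \<in> P"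
  obtains \<rho> where "\<rho> > 0" "ball p \<rho> \<subseteq> G" "\<forall>x\<in>ball p \<rho> - {p}. x \<notin> P \<and> B < norm (f x)"
proof -
  have "p \<in> G" "\<not> p islimpt P" and lim: "filterlim f at_infinity (at p)"
    using mero p unfolding meromorphic_with_poles_def by auto
  obtain r1 where r1: "r1 > 0" "ball p r1 \<subseteq> G" using G \<open>p \<in> G\<close> openE by blast
  obtain r2 where r2: "r2 > 0" "\<forall>x\<in>P. x \<noteq> p \<longrightarrow> r2 \<le> dist x p"
    using \<open>\<not> p islimpt P\<close> unfolding islimpt_approachable by (metis not_le)
  have "\<forall>\<^sub>F x in at p. max B 0 + 1 \<le> norm (f x)"
    using lim unfolding filterlim_at_infinity[OF order_refl] by simp
  then obtain r3 where r3: "r3 > 0" "\<forall>x. x \<noteq> p \<and> dist x p < r3 \<longrightarrow> max B 0 + 1 \<le> norm (f x)"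
    unfolding eventually_at by blast
  show ?thesis
  proof (rule that[of "min r1 (min r2 r3)"])
    show "ball p (min r1 (min r2 r3)) \<subseteq> G" using r1(2) by auto
    show "\<forall>x\<in>ball p (min r1 (min r2 r3)) - {p}. x \<notin> P \<and> B < norm (f x)"
      using r2(2) r3(2) by (fastforce simp: dist_commute)
  qed (use r1 r2 r3 in auto)
qed

lemma open_Diff_poles:
  assumes "meromorphic_with_poles f G P" "open G"
  shows "open (G - P)"
proof -
  have "G - P = G - closure P"
    using assms(1) unfolding meromorphic_with_poles_def closure_def by auto
  then show ?thesis using assms(2) by (simp add: open_Diff)
qed

lemma open_preimage_Diff_poles:
  fixes f :: "complex \<Rightarrow> complex"
  assumes "meromorphic_with_poles f G P" "open G" "open \<Omega>"
  shows "open {z\<in>G - P. f z \<in> \<Omega>}"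
proof -
  have "continuous_on (G - P) f"
    using assms(1) holomorphic_on_imp_continuous_on unfolding meromorphic_with_poles_def by blast
  from continuous_open_preimage[OF this open_Diff_poles[OF assms(1,2)] assms(3)]
  show ?thesis by (simp add: Int_def vimage_def)
qed

lemma poles_disjoint_closure_bounded_preimage:
  fixes f :: "complex \<Rightarrow> complex"
  assumes mero: "meromorphic_with_poles f G P" and G: "open G" and "bounded \<Omega>"
  shows "P \<inter> closure {z\<in>G - P. f z \<in> \<Omega>} = {}"
proof -
  obtain B where B: "\<forall>w\<in>\<Omega>. norm w \<le> B" using assms(3) bounded_iff by blast
  have "p \<notin> closure {z\<in>G - P. f z \<in> \<Omega>}" if p: "p \<in> P" for p
  proof -
    obtain \<rho> where \<rho>: "\<rho> > 0" "\<forall>x\<in>ball p \<rho> - {p}. x \<notin> P \<and> B < norm (f x)"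
      using meromorphic_pole_neighbourhood[OF mero G p] by blast
    have "ball p \<rho> \<inter> {z\<in>G - P. f z \<in> \<Omega>} = {}"
    proof (intro equals0I)
      fix x assume x: "x \<in> ball p \<rho> \<inter> {z\<in>G - P. f z \<in> \<Omega>}"
      then have "x \<noteq> p" using p by auto
      then have "B < norm (f x)" using \<rho>(2) x by blast
      then show False using B x by force
    qed
    then have "ball p \<rho> \<inter> closure {z\<in>G - P. f z \<in> \<Omega>} = {}"
      by (simp add: open_Int_closure_eq_empty)
    then show ?thesis using \<rho>(1) by (metis centre_in_ball disjoint_iff)
  qed
  then show ?thesis by blast
qed

lemma open_preimage_Un_poles:
  fixes f :: "complex \<Rightarrow> complex"
  assumes mero: "meromorphic_with_poles f G P" and G: "open G"
    and \<Omega>: "open \<Omega>" "bounded (- \<Omega>)"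
  shows "open ({z\<in>G - P. f z \<in> \<Omega>} \<union> P)"
  unfolding open_subopen[of "_ \<union> P"]
proof
  fix z assume z: "z \<in> {z\<in>G - P. f z \<in> \<Omega>} \<union> P"
  show "\<exists>T. open T \<and> z \<in> T \<and> T \<subseteq> {z\<in>G - P. f z \<in> \<Omega>} \<union> P"
  proof (cases "z \<in> P")
    case True
    obtain B where B: "\<forall>w\<in>- \<Omega>. norm w \<le> B" using \<Omega>(2) bounded_iff by blast
    obtain \<rho> where \<rho>: "\<rho> > 0" "ball z \<rho> \<subseteq> G" "\<forall>x\<in>ball z \<rho> - {z}. x \<notin> P \<and> B < norm (f x)"
      using meromorphic_pole_neighbourhood[OF mero G True] by blast
    have "x \<in> {z\<in>G - P. f z \<in> \<Omega>} \<union> P" if x: "x \<in> ball z \<rho>" for x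
    proof (cases "x = z")
      case False
      then have "x \<notin> P" "B < norm (f x)" using \<rho>(3) x by auto
      then have "f x \<in> \<Omega>" using B by force
      then show ?thesis using \<open>x \<notin> P\<close> \<rho>(2) x by auto
    qed (use True in simp)
    then have "ball z \<rho> \<subseteq> {z\<in>G - P. f z \<in> \<Omega>} \<union> P" by blast
    then show ?thesis using \<rho>(1) by (intro exI[of _ "ball z \<rho>"]) auto
  next
    case False
    then show ?thesis
      using z open_preimage_Diff_poles[OF mero G \<Omega>(1)] by blast
  qed
qed

lemma holomorphic_inverse_shift_near_pole:
  fixes f :: "complex \<Rightarrow> complex"
  assumes mero: "meromorphic_with_poles f G P" and G: "open G" and p: "p \<in> P"
  obtains \<rho> where "\<rho> > 0" "ball p \<rho> \<subseteq> G" "\<forall>x\<in>ball p \<rho> - {p}. x \<notin> P \<and> f x \<noteq> 0 \<and> f x \<noteq> a"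
    "(\<lambda>x. if x \<in> P then 0 else inverse (f x - a)) holomorphic_on ball p \<rho>"
proof -
  let ?h = "\<lambda>x. if x \<in> P then 0 else inverse (f x - a)"
  obtain \<rho> where \<rho>: "\<rho> > 0" "ball p \<rho> \<subseteq> G" "\<forall>x\<in>ball p \<rho> - {p}. x \<notin> P \<and> norm a < norm (f x)"
    using meromorphic_pole_neighbourhood[OF mero G p] by blast
  then have ne: "\<forall>x\<in>ball p \<rho> - {p}. x \<notin> P \<and> f x \<noteq> 0 \<and> f x \<noteq> a"
    by (metis norm_ge_zero norm_zero not_less order.strict_trans1 order_less_irrefl)
  have "filterlim f at_infinity (at p)"
    using mero p unfolding meromorphic_with_poles_def by blast
  from tendsto_add_filterlim_at_infinity'[OF this tendsto_const, of "- a"]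
  have "filterlim (\<lambda>x. f x - a) at_infinity (at p)" by simp
  then have "((\<lambda>x. inverse (f x - a)) \<longlongrightarrow> 0) (at p)"
    using filterlim_compose[OF tendsto_inverse_0] by blast
  moreover have "\<forall>\<^sub>F x in at p. inverse (f x - a) = ?h x"
    using eventually_at_ball'[OF \<rho>(1), of p UNIV] \<rho>(3) by (auto elim!: eventually_mono)
  ultimately have lim: "(?h \<longlongrightarrow> ?h p) (at p within ball p \<rho>)"
    using p by (auto intro: tendsto_within_subset Lim_transform_eventually)
  have hol: "?h holomorphic_on ball p \<rho> - {p}"
  proof (rule holomorphic_transform[of "\<lambda>x. inverse (f x - a)"])
    have "f holomorphic_on ball p \<rho> - {p}"
      using mero \<rho>(2,3) unfolding meromorphic_with_poles_def by (blast intro: holomorphic_on_subset)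
    then show "(\<lambda>x. inverse (f x - a)) holomorphic_on ball p \<rho> - {p}"
      using ne by (intro holomorphic_intros) auto
  qed (use ne in auto)
  have "?h holomorphic_on ball p \<rho>"
  proof (rule no_isolated_singularity'[of "{p}"])
    show "\<And>z. z \<in> {p} \<Longrightarrow> (?h \<longlongrightarrow> ?h z) (at z within ball p \<rho>)" using lim by blast
  qed (use hol in auto)
  with \<rho>(1,2) ne show ?thesis using that by blast
qed

lemma holomorphic_inverse_shift:
  fixes f :: "complex \<Rightarrow> complex"
  assumes mero: "meromorphic_with_poles f G P" and G: "open G"
  shows "open (G - {z\<in>G - P. f z = a})"
    and "(\<lambda>z. if z \<in> P then 0 else inverse (f z - a)) holomorphic_on (G - {z\<in>G - P. f z = a})"
proof -
  let ?h = "\<lambda>z. if z \<in> P then 0 else inverse (f z - a)"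
  define V where "V = {z\<in>G - P. f z \<in> - {a}}"
  have V: "open V" unfolding V_def using open_preimage_Diff_poles[OF mero G] by blast
  have "?h holomorphic_on V"
  proof (rule holomorphic_transform[of "\<lambda>z. inverse (f z - a)"])
    show "(\<lambda>z. inverse (f z - a)) holomorphic_on V"
      using mero unfolding V_def meromorphic_with_poles_def
      by (intro holomorphic_intros) (auto intro: holomorphic_on_subset)
  qed (auto simp: V_def)
  have "\<forall>p\<in>P. \<exists>\<rho>>0. ball p \<rho> \<subseteq> G \<and> (\<forall>x\<in>ball p \<rho> - {p}. x \<notin> P \<and> f x \<noteq> 0 \<and> f x \<noteq> a)
      \<and> ?h holomorphic_on ball p \<rho>"
  proof
    fix p assume "p \<in> P"
    then obtain \<rho> where "\<rho> > 0" "ball p \<rho> \<subseteq> G" "\<forall>x\<in>ball p \<rho> - {p}. x \<notin> P \<and> f x \<noteq> 0 \<and> f x \<noteq> a"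
      "?h holomorphic_on ball p \<rho>"
      by (rule holomorphic_inverse_shift_near_pole[OF mero G])
    then show "\<exists>\<rho>>0. ball p \<rho> \<subseteq> G \<and> (\<forall>x\<in>ball p \<rho> - {p}. x \<notin> P \<and> f x \<noteq> 0 \<and> f x \<noteq> a)
      \<and> ?h holomorphic_on ball p \<rho>" by (intro exI[of _ \<rho>] conjI)
  qed
  from bchoice[OF this] obtain \<rho> where \<rho>: "\<forall>p\<in>P. \<rho> p > 0 \<and> ball p (\<rho> p) \<subseteq> G
      \<and> (\<forall>x\<in>ball p (\<rho> p) - {p}. x \<notin> P \<and> f x \<noteq> 0 \<and> f x \<noteq> a) \<and> ?h holomorphic_on ball p (\<rho> p)"
    by (elim exE)
  have U: "G - {z\<in>G - P. f z = a} = V \<union> (\<Union>p\<in>P. ball p (\<rho> p))"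
  proof
    show "G - {z\<in>G - P. f z = a} \<subseteq> V \<union> (\<Union>p\<in>P. ball p (\<rho> p))"
      using \<rho> unfolding V_def by force
    show "V \<union> (\<Union>p\<in>P. ball p (\<rho> p)) \<subseteq> G - {z\<in>G - P. f z = a}"
      using \<rho> unfolding V_def by fastforce
  qed
  show "open (G - {z\<in>G - P. f z = a})"
    unfolding U using V by blast
  show "?h holomorphic_on (G - {z\<in>G - P. f z = a})"
    unfolding U using V \<open>?h holomorphic_on V\<close> \<rho>
    by (intro holomorphic_on_Un holomorphic_on_UN_open) auto
qed

lemma mult_at_inverse_shift:
  fixes f h :: "complex \<Rightarrow> complex"
  assumes V: "open V" "f holomorphic_on V" "\<forall>x\<in>V. f x \<noteq> a" "z \<in> V" "w \<noteq> a"
    and h: "\<forall>x\<in>V. h x = inverse (f x - a)"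
  shows "mult_at h (inverse (w - a)) z = mult_at f w z"
proof -
  obtain e where e: "e > 0" "ball z e \<subseteq> V" using V(1,4) openE by blast
  have fb: "f holomorphic_on ball z e" using holomorphic_on_subset[OF V(2) e(2)] .
  have "zero_order (\<lambda>x. h x - inverse (w - a)) z = zero_order (\<lambda>x. f x - w) z"
  proof (rule zero_order_mult_unit[of "ball z e" _ _ "\<lambda>x. - inverse ((f x - a) * (w - a))"])
    show "(\<lambda>x. - inverse ((f x - a) * (w - a))) holomorphic_on ball z e"
      using fb V(3,5) e(2) by (intro holomorphic_intros) auto
    show "\<forall>x\<in>ball z e. h x - inverse (w - a) = (f x - w) * - inverse ((f x - a) * (w - a))"
    proof
      fix x assume "x \<in> ball z e"
      then have x: "x \<in> V" using e(2) by blast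
      then have "f x - a \<noteq> 0" "w - a \<noteq> 0" using V(3,5) by auto
      then have "inverse (f x - a) - inverse (w - a)
          = ((w - a) - (f x - a)) * inverse ((f x - a) * (w - a))"
        by (simp add: field_simps)
      moreover have "h x = inverse (f x - a)" using h x by blast
      ultimately show "h x - inverse (w - a) = (f x - w) * - inverse ((f x - a) * (w - a))"
        by (simp add: algebra_simps)
    qed
  qed (use e fb V(3,5) in \<open>auto intro!: holomorphic_intros\<close>)
  then show ?thesis unfolding mult_at_def .
qed

lemma zero_order_inverse_eq_mult_at_inverse_shift:
  fixes f h k :: "complex \<Rightarrow> complex"
  assumes B: "open B" "connected B" "p \<in> B" and hB: "h holomorphic_on B" and "h p = 0" "k p = 0"
    and rel: "\<forall>x\<in>B - {p}. h x = inverse (f x - a) \<and> k x = inverse (f x) \<and> f x \<noteq> 0 \<and> f x \<noteq> a"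
  shows "zero_order k p = mult_at h 0 p"
proof -
  have nz: "1 + a * h x \<noteq> 0" if "x \<in> B" for x
    using that rel \<open>h p = 0\<close> by (cases "x = p") (auto simp: field_simps)
  have "zero_order k p = zero_order (\<lambda>x. h x - 0) p"
  proof (rule zero_order_mult_unit[OF B _ _ _ _, of _ "\<lambda>x. inverse (1 + a * h x)"])
    show "\<forall>x\<in>B. k x = (h x - 0) * inverse (1 + a * h x)"
    proof
      fix x assume "x \<in> B"
      show "k x = (h x - 0) * inverse (1 + a * h x)"
      proof (cases "x = p")
        case False
        then have "h x = inverse (f x - a)" "k x = inverse (f x)" "f x \<noteq> 0" "f x - a \<noteq> 0"
          using rel \<open>x \<in> B\<close> by auto
        moreover have "1 + a * inverse (f x - a) = f x * inverse (f x - a)"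
          using \<open>f x - a \<noteq> 0\<close> by (simp add: field_simps)
        ultimately show ?thesis by (simp add: inverse_mult_distrib)
      qed (use \<open>h p = 0\<close> \<open>k p = 0\<close> in simp)
    qed
  qed (use hB nz in \<open>auto intro!: holomorphic_intros\<close>)
  then show ?thesis unfolding mult_at_def .
qed

lemma valence_inverse_shift:
  fixes f :: "complex \<Rightarrow> complex"
  assumes mero: "meromorphic_with_poles f G P" and G: "open G"
    and E: "open E" "E \<subseteq> G" "\<forall>z\<in>E - P. f z \<noteq> a" and w: "w \<noteq> a"
  defines "h \<equiv> \<lambda>z. if z \<in> P then 0 else inverse (f z - a)"
  shows "{z\<in>E. h z = inverse (w - a)} = {z\<in>E - P. f z = w}"
    and "valence h E (inverse (w - a)) = valence f (E - P) w"
proof -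
  show lvl: "{z\<in>E. h z = inverse (w - a)} = {z\<in>E - P. f z = w}"
    using E(3) w unfolding h_def by auto
  have "E - P = E \<inter> (G - P)" using E(2) by blast
  then have V: "open (E - P)" "f holomorphic_on E - P"
    using open_Diff_poles[OF mero G] E(1) mero unfolding meromorphic_with_poles_def
    by (auto intro: holomorphic_on_subset)
  have "mult_at h (inverse (w - a)) z = mult_at f w z" if "z \<in> {z\<in>E - P. f z = w}" for z
    using mult_at_inverse_shift[OF V E(3) _ w, of z h] that unfolding h_def by auto
  then show "valence h E (inverse (w - a)) = valence f (E - P) w"
    unfolding valence_def lvl by (rule sum.cong[OF refl])
qed

lemma valence_inverse_shift_zero:
  fixes f :: "complex \<Rightarrow> complex"
  assumes mero: "meromorphic_with_poles f G P" and G: "open G"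
    and E: "E \<subseteq> G" "\<forall>z\<in>E - P. f z \<noteq> a"
  defines "h \<equiv> \<lambda>z. if z \<in> P then 0 else inverse (f z - a)"
  shows "{z\<in>E. h z = 0} = E \<inter> P"
    and "valence h E 0 = (\<Sum>z\<in>E \<inter> P. pole_mult f P z)"
proof -
  show lvl: "{z\<in>E. h z = 0} = E \<inter> P"
    using E(2) unfolding h_def by auto
  have "pole_mult f P p = mult_at h 0 p" if "p \<in> E \<inter> P" for p
  proof -
    have "p \<in> P" using that by blast
    then obtain \<rho> where \<rho>: "\<rho> > 0" "ball p \<rho> \<subseteq> G"
      "\<forall>x\<in>ball p \<rho> - {p}. x \<notin> P \<and> f x \<noteq> 0 \<and> f x \<noteq> a"
      "(\<lambda>x. if x \<in> P then 0 else inverse (f x - a)) holomorphic_on ball p \<rho>"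
      by (rule holomorphic_inverse_shift_near_pole[OF mero G])
    show ?thesis unfolding pole_mult_def
      by (rule zero_order_inverse_eq_mult_at_inverse_shift[of "ball p \<rho>" _ h])
        (use \<rho> that in \<open>auto simp: h_def\<close>)
  qed
  then show "valence h E 0 = (\<Sum>z\<in>E \<inter> P. pole_mult f P z)"
    unfolding valence_def lvl by simp
qed

section \<open>Inverting a domain with bounded complement\<close>

lemma inversion_maps_small_ball:
  fixes \<Omega> :: "complex set"
  assumes "bounded (- \<Omega>)"
  obtains \<epsilon> where "\<epsilon> > 0" "\<forall>u\<in>ball 0 \<epsilon> - {0}. a + inverse u \<in> \<Omega>"
proof -
  obtain B where B: "\<forall>x\<in>- \<Omega>. norm x \<le> B" using assms bounded_iff by blast
  define M where "M = \<bar>B\<bar> + norm a + 1"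
  have M: "M > 0" unfolding M_def by (simp add: add.commute add_pos_nonneg)
  have "a + inverse u \<in> \<Omega>" if u: "u \<in> ball 0 (inverse M) - {0}" for u
  proof (rule ccontr)
    assume "a + inverse u \<notin> \<Omega>"
    then have "norm (a + inverse u) \<le> B" using B by blast
    moreover have "norm (inverse u) \<le> norm (a + inverse u) + norm a"
      using norm_triangle_ineq4[of "a + inverse u" a] by simp
    moreover have "M < norm (inverse u)"
      using u M by (simp add: norm_inverse inverse_less_iff_less[symmetric])
    ultimately show False unfolding M_def by linarith
  qed
  then show ?thesis using that[of "inverse M"] M by simp
qed

lemma open_connected_inversion:
  fixes \<Omega> :: "complex set"
  assumes \<Omega>: "open \<Omega>" "connected \<Omega>" "bounded (- \<Omega>)" "a \<notin> \<Omega>"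
  shows "open (insert 0 ((\<lambda>u. a + inverse u) -` \<Omega>))"
    and "connected (insert 0 ((\<lambda>u. a + inverse u) -` \<Omega>))"
proof -
  obtain \<epsilon> where \<epsilon>: "\<epsilon> > 0" "\<forall>u\<in>ball 0 \<epsilon> - {0}. a + inverse u \<in> \<Omega>"
    using inversion_maps_small_ball[OF \<Omega>(3)] by blast
  let ?T = "(\<lambda>u. a + inverse u) -` \<Omega>"
  have T: "?T = (\<lambda>w. inverse (w - a)) ` \<Omega>"
    using \<Omega>(4) by (auto simp: image_iff intro!: bexI[of _ "a + inverse _"])
  have "open ?T"
  proof -
    have "continuous_on (- {0}) (\<lambda>u::complex. a + inverse u)"
      by (intro continuous_intros) auto
    from continuous_open_preimage[OF this _ \<Omega>(1)] have "open (- {0} \<inter> ?T)" by auto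
    moreover have "- {0} \<inter> ?T = ?T" using \<Omega>(4) by auto
    ultimately show ?thesis by simp
  qed
  moreover have "insert 0 ?T = ball 0 \<epsilon> \<union> ?T" using \<epsilon> by auto
  ultimately show "open (insert 0 ?T)" by auto
  have cT: "connected ?T"
    unfolding T using \<Omega>(2,4) by (intro connected_continuous_image continuous_intros) auto
  have "0 \<in> closure ?T"
  proof -
    have "0 islimpt ball (0::complex) \<epsilon>" using \<epsilon>(1) by (simp add: islimpt_ball)
    then have "0 islimpt insert 0 ?T"
      using \<open>insert 0 ?T = ball 0 \<epsilon> \<union> ?T\<close> islimpt_subset by blast
    then show ?thesis by (simp add: closure_def islimpt_insert)
  qed
  then have "insert 0 ?T \<subseteq> closure ?T"
    unfolding insert_subset by (intro conjI closure_subset)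
  then show "connected (insert 0 ?T)"
    by (rule connected_intermediate_closure[OF cT subset_insertI])
qed

section \<open>Components of preimages inside a Jordan curve\<close>

lemma frontier_subset_preimage_frontier:
  fixes f :: "'a::topological_space \<Rightarrow> 'b::topological_space"
  assumes "open V" "continuous_on V f" "Y \<inter> V = {z\<in>V. f z \<in> \<Omega>}"
  shows "frontier Y \<inter> V \<subseteq> f -` frontier \<Omega>"
proof
  fix z assume z: "z \<in> frontier Y \<inter> V"
  have pre: "open {x\<in>V. f x \<in> T}" if "open T" for T
    using continuous_open_preimage[OF assms(2,1) that] by (simp add: Int_def vimage_def)
  have "f z \<in> closure \<Omega>"
  proof (rule ccontr)
    assume "f z \<notin> closure \<Omega>"
    then have "z \<in> {x\<in>V. f x \<in> - closure \<Omega>}" using z by auto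
    moreover have "{x\<in>V. f x \<in> - closure \<Omega>} \<inter> Y = {}"
      using assms(3) closure_subset by auto
    ultimately have "z \<notin> closure Y"
      using pre[of "- closure \<Omega>"] open_Int_closure_eq_empty by blast
    then show False using z by (simp add: frontier_def)
  qed
  moreover have "f z \<notin> interior \<Omega>"
  proof
    assume "f z \<in> interior \<Omega>"
    then have "z \<in> {x\<in>V. f x \<in> interior \<Omega>}" using z by auto
    moreover have "{x\<in>V. f x \<in> interior \<Omega>} \<subseteq> Y"
      using assms(3) interior_subset by auto
    ultimately have "z \<in> interior Y"
      using pre[of "interior \<Omega>"] interior_maximal by blast
    then show False using z by (simp add: frontier_def)
  qed
  ultimately show "z \<in> f -` frontier \<Omega>" by (simp add: frontier_def)
qed

lemma frontier_component_inside_subset: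
  fixes S :: "'a::real_normed_vector set"
  assumes "closed S" "E \<in> components (Y \<inter> inside S)"
  shows "frontier E \<subseteq> S \<union> (frontier Y \<inter> inside S)"
proof -
  have "frontier E \<subseteq> frontier Y \<union> frontier (inside S)"
    using frontier_of_components_subset[OF assms(2)] frontier_Int_subset by blast
  moreover have "frontier (inside S) \<subseteq> S" using frontier_inside_subset[OF assms(1)] .
  moreover have "frontier E \<subseteq> S \<union> inside S"
  proof -
    have "closure E \<subseteq> closure (inside S)"
      using in_components_subset[OF assms(2)] by (intro closure_mono) auto
    then show ?thesis
      using closure_inside_subset[OF assms(1)] frontier_def by auto
  qed
  ultimately show ?thesis by blast
qed

lemma open_bounded_component_inside:
  fixes S :: "'a::euclidean_space set"
  assumes "open Y" "compact S" "E \<in> components (Y \<inter> inside S)"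
  shows "open E" "connected E" "E \<noteq> {}" "bounded E" "E \<subseteq> Y \<inter> inside S"
proof -
  have "open (Y \<inter> inside S)" using assms(1) open_inside[OF compact_imp_closed[OF assms(2)]] by blast
  then show "open E" "connected E" "E \<noteq> {}" "E \<subseteq> Y \<inter> inside S"
    using assms(3) open_components in_components_connected in_components_nonempty in_components_subset
    by metis+
  then show "bounded E"
    using bounded_inside[OF compact_imp_bounded[OF assms(2)]] bounded_subset by blast
qed

lemma frontier_component_preimage:
  fixes f :: "complex \<Rightarrow> complex"
  assumes mero: "meromorphic_with_poles f G P" and G: "open G"
    and S: "closed S" "inside S \<subseteq> G" and E: "E \<in> components (Y \<inter> inside S)"
    and Y: "Y \<inter> (G - P) = {z\<in>G - P. f z \<in> \<Omega>}" "P \<inter> frontier Y = {}"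
  shows "frontier E \<subseteq> S \<union> {z\<in>G - P. f z \<in> frontier \<Omega>}"
proof
  fix z assume z: "z \<in> frontier E"
  show "z \<in> S \<union> {z\<in>G - P. f z \<in> frontier \<Omega>}"
  proof (cases "z \<in> S")
    case False
    then have "z \<in> frontier Y" "z \<in> G - P"
      using frontier_component_inside_subset[OF S(1) E] z S(2) Y(2) by auto
    moreover have "continuous_on (G - P) f"
      using mero holomorphic_on_imp_continuous_on unfolding meromorphic_with_poles_def by blast
    ultimately have "f z \<in> frontier \<Omega>"
      using frontier_subset_preimage_frontier[OF open_Diff_poles[OF mero G] _ Y(1)] by blast
    then show ?thesis using \<open>z \<in> G - P\<close> by blast
  qed simp
qed

lemma valence_components_bounded_preimage:
  fixes f :: "complex \<Rightarrow> complex"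
  assumes mero: "meromorphic_with_poles f G P" and G: "open G"
    and S: "compact S" "inside S \<subseteq> G" "S \<subseteq> G - P" "\<forall>z\<in>S. f z \<notin> \<Omega>"
    and \<Omega>: "open \<Omega>" "connected \<Omega>" "bounded \<Omega>"
    and E: "E \<in> components ({z\<in>G - P. f z \<in> \<Omega>} \<inter> inside S)"
  shows "\<exists>n>0. \<forall>w\<in>\<Omega>. finite {z\<in>E. f z = w} \<and> valence f E w = n"
proof -
  let ?Y = "{z\<in>G - P. f z \<in> \<Omega>}"
  note E' = open_bounded_component_inside[OF open_preimage_Diff_poles[OF mero G \<Omega>(1)] S(1) E]
  have "P \<inter> frontier ?Y = {}"
    using poles_disjoint_closure_bounded_preimage[OF mero G \<Omega>(3)] frontier_def by blast
  then have "frontier E \<subseteq> S \<union> {z\<in>G - P. f z \<in> frontier \<Omega>}"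
    using frontier_component_preimage[OF mero G compact_imp_closed[OF S(1)] S(2) E] by blast
  then have fr: "frontier E \<subseteq> {z\<in>G - P. f z \<notin> \<Omega>}"
    using S(3,4) frontier_disjoint_eq[of \<Omega>] \<Omega>(1) by blast
  have "closure E \<subseteq> G - P"
    using closure_Un_frontier[of E] E'(5) fr by blast
  moreover have "f holomorphic_on G - P"
    using mero unfolding meromorphic_with_poles_def by blast
  ultimately show ?thesis
    using valence_constant[OF open_Diff_poles[OF mero G] _ E'(1,2,4) _ E'(3) \<Omega>(1,2)] E'(5) fr
    by blast
qed

lemma valence_components_cobounded_preimage:
  fixes f :: "complex \<Rightarrow> complex"
  assumes mero: "meromorphic_with_poles f G P" and G: "open G"
    and S: "compact S" "inside S \<subseteq> G" "S \<subseteq> G - P" "\<forall>z\<in>S. f z \<notin> \<Omega> \<and> f z \<noteq> a"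
    and \<Omega>: "open \<Omega>" "connected \<Omega>" "bounded (- \<Omega>)" "a \<notin> closure \<Omega>"
    and E: "E \<in> components (({z\<in>G - P. f z \<in> \<Omega>} \<union> P) \<inter> inside S)"
  shows "\<exists>n>0. (\<forall>w\<in>\<Omega>. finite {z\<in>E - P. f z = w} \<and> valence f (E - P) w = n) \<and>
           finite (E \<inter> P) \<and> (\<Sum>z\<in>E \<inter> P. pole_mult f P z) = n"
proof -
  let ?Y = "{z\<in>G - P. f z \<in> \<Omega>} \<union> P"
  let ?h = "\<lambda>z. if z \<in> P then 0 else inverse (f z - a)"
  let ?Om = "insert 0 ((\<lambda>u. a + inverse u) -` \<Omega>)"
  have a: "a \<notin> \<Omega>" using \<Omega>(4) closure_subset by blast
  have "open ?Y" by (rule open_preimage_Un_poles[OF mero G \<Omega>(1,3)])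
  note E' = open_bounded_component_inside[OF this S(1) E]
  have EG: "E \<subseteq> G" using E'(5) S(2) by blast
  have Ea: "\<forall>z\<in>E - P. f z \<noteq> a" using E'(5) a by auto
  have "P \<inter> frontier ?Y = {}" using \<open>open ?Y\<close> frontier_disjoint_eq by blast
  then have "frontier E \<subseteq> S \<union> {z\<in>G - P. f z \<in> frontier \<Omega>}"
    using frontier_component_preimage[OF mero G compact_imp_closed[OF S(1)] S(2) E] by blast
  then have fr: "frontier E \<subseteq> {z\<in>G - P. f z \<notin> \<Omega> \<and> f z \<noteq> a}"
    using S(3,4) \<Omega>(1,4) frontier_disjoint_eq[of \<Omega>] frontier_def by blast
  have cl: "closure E \<subseteq> G - {z\<in>G - P. f z = a}"
    using closure_Un_frontier[of E] EG Ea fr by auto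
  have img: "?h ` E \<subseteq> ?Om" and fr': "\<forall>z\<in>frontier E. ?h z \<notin> ?Om"
    using E'(5) fr by auto
  from valence_constant[OF holomorphic_inverse_shift[OF mero G] E'(1,2) E'(4) cl E'(3)
      open_connected_inversion[OF \<Omega>(1-3) a] img fr']
  obtain n where n: "n > 0" "\<forall>c\<in>?Om. finite {z\<in>E. ?h z = c} \<and> valence ?h E c = n"
    by blast
  have "finite {z\<in>E - P. f z = w} \<and> valence f (E - P) w = n" if "w \<in> \<Omega>" for w
  proof -
    have "w \<noteq> a" "inverse (w - a) \<in> ?Om" using that a by auto
    with n(2) have "finite {z\<in>E. ?h z = inverse (w - a)} \<and> valence ?h E (inverse (w - a)) = n"
      by blast
    then show ?thesis unfolding valence_inverse_shift[OF mero G E'(1) EG Ea \<open>w \<noteq> a\<close>] .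
  qed
  moreover have "finite (E \<inter> P) \<and> (\<Sum>z\<in>E \<inter> P. pole_mult f P z) = n"
  proof -
    from n(2) have "finite {z\<in>E. ?h z = 0} \<and> valence ?h E 0 = n" by blast
    then show ?thesis unfolding valence_inverse_shift_zero[OF mero G EG Ea] .
  qed
  ultimately show ?thesis using n(1) by blast
qed

theorem mainTheorem2:
  fixes f :: "complex \<Rightarrow> complex" and G P S \<Gamma> :: "complex set"
  assumes G_open: "open G" and G_conn: "connected G" and G_sc: "simply_connected G"
    and S_smooth: "smooth_jordan_curve S" and S_sub: "S \<subseteq> G"
    and \<Gamma>_smooth: "smooth_jordan_curve \<Gamma>"
    and f_mero: "meromorphic_with_poles f G P"
    and S_lemn: "S \<in> components {z \<in> G - P. f z \<in> \<Gamma>}"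
  shows
    "(\<forall>E \<in> components ({z \<in> G - P. f z \<in> inside \<Gamma>} \<inter> inside S).
        \<exists>n::nat. n > 0 \<and>
          (\<forall>w \<in> inside \<Gamma>. finite {z \<in> E. f z = w} \<and>
             (\<Sum>z \<in> {z \<in> E. f z = w}. mult_at f w z) = n))
     \<and>
     (\<forall>E \<in> components (({z \<in> G - P. f z \<in> outside \<Gamma>} \<union> P) \<inter> inside S).
        \<exists>n::nat. n > 0 \<and>
          (\<forall>w \<in> outside \<Gamma>. finite {z \<in> E - P. f z = w} \<and>
             (\<Sum>z \<in> {z \<in> E - P. f z = w}. mult_at f w z) = n) \<and>
          finite (E \<inter> P) \<and> (\<Sum>z \<in> E \<inter> P. pole_mult f P z) = n)"
(* Only S \<subseteq> f\<^sup>-\<^sup>1(\<Gamma>) is used, not that S is a whole component; G need not be connected. *)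
proof -
  obtain a where a: "a \<in> inside \<Gamma>" using smooth_jordan_curve_inside(2)[OF \<Gamma>_smooth] by blast
  have \<Gamma>: "compact \<Gamma>" "connected (inside \<Gamma>)"
    using smooth_jordan_curve_inside[OF \<Gamma>_smooth] by auto
  have S: "compact S" "inside S \<subseteq> G" "S \<subseteq> G - P" "\<forall>z\<in>S. f z \<in> \<Gamma>"
    using smooth_jordan_curve_inside(1)[OF S_smooth] in_components_subset[OF S_lemn]
      subset_simply_connected_imp_inside_subset[OF G_sc G_open S_sub] by auto
  have "\<forall>z\<in>S. f z \<notin> inside \<Gamma>" "\<forall>z\<in>S. f z \<notin> outside \<Gamma> \<and> f z \<noteq> a"
    using S(4) a inside_no_overlap outside_no_overlap by blast+
  moreover have "open (inside \<Gamma>)" "bounded (inside \<Gamma>)"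
    using \<Gamma>(1) by (simp_all add: open_inside compact_imp_closed bounded_inside compact_imp_bounded)
  moreover have "open (outside \<Gamma>)" "connected (outside \<Gamma>)" "bounded (- outside \<Gamma>)"
    using \<Gamma>(1) by (simp_all add: open_outside compact_imp_closed connected_outside
        cobounded_outside compact_imp_bounded)
  moreover have "a \<notin> closure (outside \<Gamma>)"
    using a closure_outside_subset[OF compact_imp_closed[OF \<Gamma>(1)]] inside_no_overlap inside_Int_outside
    by blast
  ultimately show ?thesis
    unfolding valence_def[symmetric]
    using valence_components_bounded_preimage[OF f_mero G_open S(1-3), of "inside \<Gamma>"]
      valence_components_cobounded_preimage[OF f_mero G_open S(1-3), of "outside \<Gamma>" a] \<Gamma>(2)
    by blast
qed

end
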